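(* Let $c\in\mathbb{R}$, $\beta\neq-\frac{c-1}{2}$, $u(x)=|x|^\beta$, let $\Delta_1,\Delta_2,\Delta_3\in\mathcal{B}(\mathbb{R}^d)$ be pairwise disjoint with Lebesgue measure $1$, and let $f=\sum_{k=1}^3 e^{\alpha k}\mathbb{1}_{\Delta_k}$ where $\alpha\neq0$ satisfies: if $\beta>-\frac{c-1}{2}$, then $\frac{\log((\sqrt5-1)/2)}{\beta+\frac{c-1}{2}}\le\alpha\le\frac{\log((1+\sqrt5)/2)}{\beta+\frac{c-1}{2}}$; if $\beta<-\frac{c-1}{2}$, then $\frac{\log((1+\sqrt5)/2)}{\beta+\frac{c-1}{2}}\le\alpha\le\frac{\log((\sqrt5-1)/2)}{\beta+\frac{c-1}{2}}$. Then, writing $f_k=e^{\alpha k}$, for every permutation $\sigma$ of $\{1,2,3\}$ one has $\sum_{j=2}^3\left(\frac{f_{\sigma(j)}}{f_{\sigma(1)}}\right)^{\beta+\frac{c-1}{2}}\ge1$; nevertheless $\inf_{x\in\mathbb{R}}|m_{f,\pm}(x)|>0$, and hence for every $v\in L^2(\mathbb{R}^\times,|x|^cdx)$ the equation $v(x)=\int_{\mathrm{supp}(f)}\frac{u(f(s))}{|f(s)|}w(x/f(s))\,ds$ has a unique solution $w\in L^2(\mathbb{R}^\times,|x|^cdx)$.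
   Context: $\mathbb{R}^\times=\mathbb{R}\setminus\{0\}$, $\mathrm{supp}(f)=\{s:f(s)\ne0\}$, $m_{f,+}(x)=\int_{\mathrm{supp}(f)} u(f(s))|f(s)|^{(c-1)/2}e^{-ix\log|f(s)|}ds$ and $m_{f,-}(x)=\int_{\mathrm{supp}(f)} u(f(s))|f(s)|^{(c-1)/2}e^{-ix\log|f(s)|}\,\mathrm{sgn} f(s)\,ds$. *)

theory Defs
  imports "HOL-Analysis.Analysis" "HOL-Combinatorics.Permutations"
begin

definition supp_fun :: "('a \<Rightarrow> real) \<Rightarrow> 'a set" where
  "supp_fun f = {s. f s \<noteq> 0}"

definition m_plus :: "real \<Rightarrow> (real \<Rightarrow> real) \<Rightarrow> ('n::euclidean_space \<Rightarrow> real) \<Rightarrow> real \<Rightarrow> complex" where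
  "m_plus c u f x = (LINT s:supp_fun f|lborel.
      complex_of_real (u (f s) * \<bar>f s\<bar> powr ((c - 1) / 2)) * exp (- \<i> * complex_of_real (x * ln \<bar>f s\<bar>)))"

definition m_minus :: "real \<Rightarrow> (real \<Rightarrow> real) \<Rightarrow> ('n::euclidean_space \<Rightarrow> real) \<Rightarrow> real \<Rightarrow> complex" where
  "m_minus c u f x = (LINT s:supp_fun f|lborel.
      complex_of_real (u (f s) * \<bar>f s\<bar> powr ((c - 1) / 2)) * exp (- \<i> * complex_of_real (x * ln \<bar>f s\<bar>))
      * complex_of_real (sgn (f s)))"

definition L2w :: "real \<Rightarrow> (real \<Rightarrow> complex) \<Rightarrow> bool" where
  "L2w c w \<longleftrightarrow> w \<in> borel_measurable lborel \<and>
     set_integrable lborel (UNIV - {0}) (\<lambda>x. (cmod (w x))\<^sup>2 * \<bar>x\<bar> powr c)"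

definition Top :: "(real \<Rightarrow> real) \<Rightarrow> ('n::euclidean_space \<Rightarrow> real) \<Rightarrow> (real \<Rightarrow> complex) \<Rightarrow> real \<Rightarrow> complex" where
  "Top u f w x = (LINT s:supp_fun f|lborel. complex_of_real (u (f s) / \<bar>f s\<bar>) * w (x / f s))"

end

theory Submission
  imports Defs
begin

text \<open>
  Put \<open>\<gamma> = \<beta> + (c - 1)/2\<close> and \<open>q = e\<^bsup>\<alpha>\<gamma>\<^esup>\<close>. The hypotheses on \<open>\<alpha>\<close> say exactly that \<open>q\<close> lies between
  the inverse golden ratio \<open>p = (\<surd>5 - 1)/2\<close> and the golden ratio \<open>1/p\<close>, so the ratio sums, which
  are \<open>q + q\<^sup>2\<close>, \<open>q + q\<^sup>-\<^sup>1\<close> or \<open>q\<^sup>-\<^sup>1 + q\<^sup>-\<^sup>2\<close>, are at least \<open>p + p\<^sup>2 = 1\<close>.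
  For the three-step function \<open>f\<close> one gets \<open>m\<^sub>f\<^sub>,\<^sub>\<plusminus>(x) = qz + q\<^sup>2z\<^sup>2 + q\<^sup>3z\<^sup>3\<close> with \<open>|z| = 1\<close>, and
  \<open>(1 - qz)(1 + qz + q\<^sup>2z\<^sup>2) = 1 - q\<^sup>3z\<^sup>3\<close> bounds it below by \<open>q|1 - q\<^sup>3|/(1 + q) > 0\<close>.
  The integral operator becomes \<open>S + S\<^sup>2 + S\<^sup>3\<close> for the dilation \<open>S w = b w(\<cdot> \<sigma>)\<close>,
  \<open>b = e\<^bsup>(\<beta>-1)\<alpha>\<^esup>\<close>, \<open>\<sigma> = e\<^bsup>-\<alpha>\<^esup>\<close>, which multiplies the squared weighted \<open>L\<^sup>2\<close> norm by \<open>q\<^sup>2 \<noteq> 1\<close>;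
  so \<open>S\<^sup>3\<close> or \<open>S\<^sup>-\<^sup>3\<close> is a contraction, and the equation is uniquely solvable.
\<close>

section \<open>Dilations in the weighted \<open>L\<^sup>2\<close> space\<close>

text \<open>Isabelle's \<open>0 powr c = 0\<close> makes the weight vanish at \<open>0\<close>, so integrating over \<open>\<real>\<close> instead
  of \<open>\<real> - {0}\<close> changes nothing.\<close>

definition weighted_sq_norm :: "real \<Rightarrow> (real \<Rightarrow> complex) \<Rightarrow> ennreal" where
  "weighted_sq_norm c h = (\<integral>\<^sup>+x. ennreal ((cmod (h x))\<^sup>2 * \<bar>x\<bar> powr c) \<partial>lborel)"

lemma L2w_iff_weighted_sq_norm:
  "L2w c w \<longleftrightarrow> w \<in> borel_measurable borel \<and> weighted_sq_norm c w < \<infinity>"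
proof -
  have eq: "(\<lambda>x. ennreal (norm (indicator (UNIV - {0}) x *\<^sub>R ((cmod (w x))\<^sup>2 * \<bar>x\<bar> powr c))))
      = (\<lambda>x. ennreal ((cmod (w x))\<^sup>2 * \<bar>x\<bar> powr c))"
    by (auto simp: indicator_def fun_eq_iff)
  show ?thesis
    unfolding L2w_def set_integrable_def integrable_iff_bounded weighted_sq_norm_def eq by auto
qed

lemma weighted_sq_norm_dilation:
  fixes h :: "real \<Rightarrow> complex"
  assumes [measurable]: "h \<in> borel_measurable borel" and \<rho>: "\<rho> > 0"
  shows "weighted_sq_norm c (\<lambda>x. complex_of_real B * h (x * \<rho>))
       = ennreal (B\<^sup>2 * \<rho> powr (- c - 1)) * weighted_sq_norm c h"
proof -
  define I where "I = (\<integral>\<^sup>+x. ennreal ((cmod (h (x * \<rho>)))\<^sup>2 * \<bar>x\<bar> powr c) \<partial>lborel)"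
  have "weighted_sq_norm c h
      = ennreal \<rho> * (\<integral>\<^sup>+x. ennreal ((cmod (h (0 + \<rho> * x)))\<^sup>2 * \<bar>0 + \<rho> * x\<bar> powr c) \<partial>lborel)"
    unfolding weighted_sq_norm_def using \<rho> by (subst nn_integral_real_affine[where c=\<rho> and t=0]) auto
  also have "\<dots> = ennreal \<rho> * (\<integral>\<^sup>+x. ennreal (\<rho> powr c) * ennreal ((cmod (h (x * \<rho>)))\<^sup>2 * \<bar>x\<bar> powr c) \<partial>lborel)"
    using \<rho> by (auto simp: abs_mult powr_mult ennreal_mult'[symmetric] mult_ac intro!: nn_integral_cong)
  also have "\<dots> = ennreal (\<rho> powr (c + 1)) * I"
    using \<rho> by (simp add: nn_integral_cmult I_def ennreal_mult powr_add mult_ac)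
  finally have h: "weighted_sq_norm c h = ennreal (\<rho> powr (c + 1)) * I" .
  have "weighted_sq_norm c (\<lambda>x. complex_of_real B * h (x * \<rho>)) = ennreal (B\<^sup>2) * I"
    unfolding weighted_sq_norm_def I_def
    by (simp add: norm_mult power_mult_distrib ennreal_mult' mult.assoc nn_integral_cmult)
  also have "B\<^sup>2 = B\<^sup>2 * \<rho> powr (- c - 1) * \<rho> powr (c + 1)"
    using \<rho> by (simp add: mult.assoc powr_add[symmetric])
  finally show ?thesis
    using \<rho> by (simp add: h ennreal_mult mult.assoc)
qed

lemma power_dilation_factor:
  fixes B \<rho> :: real
  assumes "\<rho> > 0"
  shows "(B ^ n)\<^sup>2 * (\<rho> ^ n) powr a = (B\<^sup>2 * \<rho> powr a) ^ n"
  using assms by (simp add: powr_realpow[symmetric] power_mult_distrib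
      powr_powr_swap power_mult[symmetric] mult.commute[of 2])

lemma weighted_sq_norm_power_dilation:
  fixes h :: "real \<Rightarrow> complex"
  assumes "h \<in> borel_measurable borel" and "\<rho> > 0"
  shows "weighted_sq_norm c (\<lambda>x. complex_of_real (B ^ n) * h (x * \<rho> ^ n))
       = ennreal ((B\<^sup>2 * \<rho> powr (- c - 1)) ^ n) * weighted_sq_norm c h"
proof -
  have "weighted_sq_norm c (\<lambda>x. complex_of_real (B ^ n) * h (x * \<rho> ^ n))
      = ennreal ((B ^ n)\<^sup>2 * (\<rho> ^ n) powr (- c - 1)) * weighted_sq_norm c h"
    using assms by (intro weighted_sq_norm_dilation) auto
  also have "(B ^ n)\<^sup>2 * (\<rho> ^ n) powr (- c - 1) = (B\<^sup>2 * \<rho> powr (- c - 1)) ^ n"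
    using assms(2) by (rule power_dilation_factor)
  finally show ?thesis .
qed

lemma square_sum_le_geometric_weighted:
  fixes a :: "nat \<Rightarrow> real"
  assumes s: "0 < s" "s < 1"
  shows "(\<Sum>n<N. a n)\<^sup>2 \<le> (\<Sum>n<N. (a n)\<^sup>2 / s ^ n) / (1 - s)"
proof -
  have "(\<Sum>n<N. a n)\<^sup>2 = (\<Sum>n<N. sqrt (s ^ n) * (a n / sqrt (s ^ n)))\<^sup>2"
    using s by simp
  also have "\<dots> \<le> (\<Sum>n<N. (sqrt (s ^ n))\<^sup>2) * (\<Sum>n<N. (a n / sqrt (s ^ n))\<^sup>2)"
    by (rule Cauchy_Schwarz_ineq_sum)
  also have "\<dots> = (\<Sum>n<N. s ^ n) * (\<Sum>n<N. (a n)\<^sup>2 / s ^ n)"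
    using s by (simp add: power_divide)
  also have "\<dots> \<le> (1 / (1 - s)) * (\<Sum>n<N. (a n)\<^sup>2 / s ^ n)"
  proof (rule mult_right_mono)
    show "(\<Sum>n<N. s ^ n) \<le> 1 / (1 - s)"
      using s sum_le_suminf[of "\<lambda>n. s ^ n" "{..<N}"] suminf_geometric[of s]
      by (simp add: summable_geometric)
  qed (use s in \<open>simp add: sum_nonneg\<close>)
  finally show ?thesis by simp
qed

lemma summable_of_weighted_square_suminf:
  fixes a :: "nat \<Rightarrow> real"
  assumes a: "\<And>n. a n \<ge> 0" and s: "0 < s" "s < 1" and t: "t \<ge> 0"
    and sum_t: "(\<Sum>n. ennreal ((a n)\<^sup>2 / s ^ n)) = ennreal t"
  shows "summable a" and "(\<Sum>n. a n)\<^sup>2 \<le> t / (1 - s)"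
proof -
  have partial: "(\<Sum>n<N. a n) \<le> sqrt (t / (1 - s))" for N
  proof -
    have "ennreal (\<Sum>n<N. (a n)\<^sup>2 / s ^ n) = (\<Sum>n<N. ennreal ((a n)\<^sup>2 / s ^ n))"
      using s by (subst sum_ennreal[symmetric]) auto
    also have "\<dots> \<le> ennreal t"
      unfolding sum_t[symmetric] by (rule sum_le_suminf) auto
    finally have "(\<Sum>n<N. (a n)\<^sup>2 / s ^ n) \<le> t"
      using t by simp
    then have "(\<Sum>n<N. (a n)\<^sup>2 / s ^ n) / (1 - s) \<le> t / (1 - s)"
      using s by (intro divide_right_mono) auto
    then have "(\<Sum>n<N. a n)\<^sup>2 \<le> t / (1 - s)"
      using square_sum_le_geometric_weighted[OF s, of a N] by linarith
    then show ?thesis using a by (simp add: real_le_rsqrt sum_nonneg)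
  qed
  show "summable a"
    using a partial by (intro summableI_nonneg_bounded) auto
  then have "(\<Sum>n. a n) \<le> sqrt (t / (1 - s))"
    using partial by (rule suminf_le_const)
  moreover have "0 \<le> (\<Sum>n. a n)"
    using \<open>summable a\<close> a by (simp add: suminf_nonneg)
  ultimately have "(\<Sum>n. a n)\<^sup>2 \<le> (sqrt (t / (1 - s)))\<^sup>2"
    by (rule power_mono)
  then show "(\<Sum>n. a n)\<^sup>2 \<le> t / (1 - s)"
    using s t by simp
qed

lemma nn_integral_weighted_dilation_series:
  fixes v :: "real \<Rightarrow> complex"
  assumes v[measurable]: "v \<in> borel_measurable borel" and \<rho>: "\<rho> > 0"
    and s: "0 < s" "s < 1" and s_sq: "s\<^sup>2 = B\<^sup>2 * \<rho> powr (- c - 1)"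
  shows "(\<integral>\<^sup>+x. (\<Sum>n. ennreal ((cmod (complex_of_real (B ^ n) * v (x * \<rho> ^ n)))\<^sup>2 / s ^ n))
            * ennreal (\<bar>x\<bar> powr c) \<partial>lborel)
       = ennreal (1 / (1 - s)) * weighted_sq_norm c v"
proof -
  define h where "h n x = complex_of_real (B ^ n) * v (x * \<rho> ^ n)" for n x
  have [measurable]: "h n \<in> borel_measurable borel" for n
    unfolding h_def by measurable
  have term_eq: "ennreal ((cmod (h n x))\<^sup>2 / s ^ n) * ennreal (\<bar>x\<bar> powr c)
      = ennreal (1 / s ^ n) * ennreal ((cmod (h n x))\<^sup>2 * \<bar>x\<bar> powr c)" for n x
    using s by (simp add: ennreal_mult[symmetric])
  have "(\<integral>\<^sup>+x. (\<Sum>n. ennreal ((cmod (h n x))\<^sup>2 / s ^ n)) * ennreal (\<bar>x\<bar> powr c) \<partial>lborel)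
      = (\<integral>\<^sup>+x. (\<Sum>n. ennreal (1 / s ^ n) * ennreal ((cmod (h n x))\<^sup>2 * \<bar>x\<bar> powr c)) \<partial>lborel)"
    by (simp add: ennreal_suminf_multc[symmetric] term_eq)
  also have "\<dots> = (\<Sum>n. ennreal (1 / s ^ n) * weighted_sq_norm c (h n))"
    unfolding weighted_sq_norm_def by (subst nn_integral_suminf) (auto intro!: suminf_cong nn_integral_cmult)
  also have "\<dots> = (\<Sum>n. ennreal (s ^ n) * weighted_sq_norm c v)"
  proof (rule suminf_cong)
    fix n
    have "1 / s ^ n * (s\<^sup>2) ^ n = s ^ n"
      using s by (simp add: power_mult[symmetric] power_add[symmetric] mult_2_right field_simps)
    moreover have "weighted_sq_norm c (h n) = ennreal ((s\<^sup>2) ^ n) * weighted_sq_norm c v"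
      unfolding h_def s_sq using \<rho> by (intro weighted_sq_norm_power_dilation) auto
    ultimately show "ennreal (1 / s ^ n) * weighted_sq_norm c (h n) = ennreal (s ^ n) * weighted_sq_norm c v"
      using s by (simp add: mult.assoc[symmetric] ennreal_mult[symmetric])
  qed
  also have "\<dots> = ennreal (1 / (1 - s)) * weighted_sq_norm c v"
    using s by (subst ennreal_suminf_multc) (simp add: suminf_ennreal2 summable_geometric suminf_geometric)
  finally show ?thesis
    unfolding h_def .
qed

text \<open>For a contraction \<open>S g = B g(\<cdot> \<rho>)\<close> the equation \<open>g - S g = v\<close> is solved by the Neumann
  series \<open>g = \<Sum>\<^sub>n S\<^sup>n v\<close>. Its pointwise convergence comes from Cauchy--Schwarz with geometric
  weights \<open>s\<^sup>n\<close>, where \<open>s\<^sup>2\<close> is the factor by which \<open>S\<close> scales \<open>weighted_sq_norm\<close>.\<close>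

lemma dilation_equation_solvable:
  fixes v :: "real \<Rightarrow> complex"
  assumes v[measurable]: "v \<in> borel_measurable borel" and v_fin: "weighted_sq_norm c v < \<infinity>"
    and B: "B \<noteq> 0" and \<rho>: "\<rho> > 0" and contr: "B\<^sup>2 * \<rho> powr (- c - 1) < 1"
  shows "\<exists>g. g \<in> borel_measurable borel \<and> weighted_sq_norm c g < \<infinity> \<and>
           (AE x in lborel. g x - complex_of_real B * g (x * \<rho>) = v x)"
proof -
  define s where "s = sqrt (B\<^sup>2 * \<rho> powr (- c - 1))"
  have s: "0 < s" "s < 1" and s_sq: "s\<^sup>2 = B\<^sup>2 * \<rho> powr (- c - 1)"
    using B \<rho> contr by (auto simp: s_def)
  define h where "h n x = complex_of_real (B ^ n) * v (x * \<rho> ^ n)" for n x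
  define T where "T x = (\<Sum>n. ennreal ((cmod (h n x))\<^sup>2 / s ^ n))" for x
  define g where "g x = (\<Sum>n. h n x)" for x
  have [measurable]: "h n \<in> borel_measurable borel" for n
    unfolding h_def by measurable
  have T_meas[measurable]: "T \<in> borel_measurable borel" and g_meas: "g \<in> borel_measurable borel"
    unfolding T_def g_def by measurable
  have T_int: "(\<integral>\<^sup>+x. T x * ennreal (\<bar>x\<bar> powr c) \<partial>lborel) = ennreal (1 / (1 - s)) * weighted_sq_norm c v"
    unfolding T_def h_def using nn_integral_weighted_dilation_series[OF v \<rho> s s_sq] .
  then have T_int_fin: "(\<integral>\<^sup>+x. T x * ennreal (\<bar>x\<bar> powr c) \<partial>lborel) \<noteq> \<infinity>"
    using v_fin by (simp add: ennreal_mult_eq_top_iff)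
  have summable_h: "summable (\<lambda>n. norm (h n x))" and norm_g: "(cmod (g x))\<^sup>2 \<le> t / (1 - s)"
    if "T x = ennreal t" "t \<ge> 0" for x t
  proof -
    have "summable (\<lambda>n. norm (h n x))" "(\<Sum>n. norm (h n x))\<^sup>2 \<le> t / (1 - s)"
      using summable_of_weighted_square_suminf[OF _ s that(2)] that(1) unfolding T_def by auto
    moreover have "cmod (g x) \<le> (\<Sum>n. norm (h n x))"
      using calculation(1) unfolding g_def by (rule summable_norm)
    ultimately show "summable (\<lambda>n. norm (h n x))" "(cmod (g x))\<^sup>2 \<le> t / (1 - s)"
      by (auto intro: order_trans[OF power_mono])
  qed
  have g_le_T: "ennreal ((cmod (g x))\<^sup>2 * \<bar>x\<bar> powr c) \<le> ennreal (1 / (1 - s)) * (T x * ennreal (\<bar>x\<bar> powr c))" for x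
  proof (cases "T x")
    case (real t)
    then have "(cmod (g x))\<^sup>2 * \<bar>x\<bar> powr c \<le> t / (1 - s) * \<bar>x\<bar> powr c"
      using norm_g[of x t] by (intro mult_right_mono) auto
    then show ?thesis
      using real s by (simp add: ennreal_mult[symmetric] ennreal_leI mult.assoc)
  next
    case top
    then show ?thesis
      using s by (cases "x = 0") (simp_all add: ennreal_mult_top)
  qed
  have "weighted_sq_norm c g \<le> (\<integral>\<^sup>+x. ennreal (1 / (1 - s)) * (T x * ennreal (\<bar>x\<bar> powr c)) \<partial>lborel)"
    unfolding weighted_sq_norm_def by (rule nn_integral_mono) (rule g_le_T)
  also have "\<dots> < \<infinity>"
    using T_int_fin by (simp add: nn_integral_cmult ennreal_mult_less_top less_top)
  finally have g_fin: "weighted_sq_norm c g < \<infinity>" .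
  have "AE x in lborel. T x \<noteq> \<infinity> \<and> x \<noteq> 0"
    using nn_integral_PInf_AE[OF _ T_int_fin, simplified] AE_lborel_singleton[of 0]
    by eventually_elim (auto simp: ennreal_mult_eq_top_iff)
  then have "AE x in lborel. g x - complex_of_real B * g (x * \<rho>) = v x"
  proof eventually_elim
    case (elim x)
    then obtain t where "T x = ennreal t" "t \<ge> 0"
      by (cases "T x") auto
    then have "summable (\<lambda>n. h n x)"
      by (rule summable_norm_cancel[OF summable_h])
    then have "summable (\<lambda>n. h (Suc n) x)"
      by (subst summable_Suc_iff)
    moreover have h_Suc: "h (Suc n) x = complex_of_real B * h n (x * \<rho>)" for n
      by (simp add: h_def mult_ac)
    ultimately have "summable (\<lambda>n. complex_of_real B * h n (x * \<rho>))"
      by simp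
    then have "summable (\<lambda>n. h n (x * \<rho>))"
      using B by simp
    then have "complex_of_real B * g (x * \<rho>) = (\<Sum>n. h (Suc n) x)"
      unfolding g_def h_Suc by (rule suminf_mult[symmetric])
    also have "\<dots> = g x - h 0 x"
      unfolding g_def using \<open>summable (\<lambda>n. h n x)\<close> by (rule suminf_split_head)
    finally show ?case
      by (simp add: h_def)
  qed
  then show ?thesis
    using g_meas g_fin by blast
qed

lemma weighted_sq_norm_eq_0_iff:
  assumes [measurable]: "h \<in> borel_measurable borel"
  shows "weighted_sq_norm c h = 0 \<longleftrightarrow> (AE x in lborel. h x = 0)"
proof -
  have "weighted_sq_norm c h = 0 \<longleftrightarrow> (AE x in lborel. ennreal ((cmod (h x))\<^sup>2 * \<bar>x\<bar> powr c) = 0)"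
    unfolding weighted_sq_norm_def by (rule nn_integral_0_iff_AE) measurable
  also have "\<dots> \<longleftrightarrow> (AE x in lborel. h x = 0)"
  proof
    show "AE x in lborel. h x = 0" if "AE x in lborel. ennreal ((cmod (h x))\<^sup>2 * \<bar>x\<bar> powr c) = 0"
      using that AE_lborel_singleton[of 0] by eventually_elim (simp add: ennreal_eq_0_iff mult_le_0_iff)
  qed (auto elim!: eventually_mono)
  finally show ?thesis .
qed

lemma weighted_sq_norm_cong_AE:
  "(AE x in lborel. h x = h' x) \<Longrightarrow> weighted_sq_norm c h = weighted_sq_norm c h'"
  unfolding weighted_sq_norm_def by (rule nn_integral_cong_AE) (auto elim!: eventually_mono)

lemma weighted_sq_norm_diff_finite:
  assumes [measurable]: "h1 \<in> borel_measurable borel" "h2 \<in> borel_measurable borel"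
    and "weighted_sq_norm c h1 < \<infinity>" "weighted_sq_norm c h2 < \<infinity>"
  shows "weighted_sq_norm c (\<lambda>x. h1 x - h2 x) < \<infinity>"
proof -
  have pointwise: "ennreal ((cmod (h1 x - h2 x))\<^sup>2 * \<bar>x\<bar> powr c)
      \<le> 2 * ennreal ((cmod (h1 x))\<^sup>2 * \<bar>x\<bar> powr c) + 2 * ennreal ((cmod (h2 x))\<^sup>2 * \<bar>x\<bar> powr c)" for x
  proof -
    have "(cmod (h1 x - h2 x))\<^sup>2 \<le> (cmod (h1 x) + cmod (h2 x))\<^sup>2"
      by (intro power_mono norm_triangle_ineq4) simp
    also have "\<dots> \<le> 2 * (cmod (h1 x))\<^sup>2 + 2 * (cmod (h2 x))\<^sup>2"
      using sum_squares_bound[of "cmod (h1 x)" "cmod (h2 x)"] by (simp add: power2_sum)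
    finally have "(cmod (h1 x - h2 x))\<^sup>2 * \<bar>x\<bar> powr c
        \<le> (2 * (cmod (h1 x))\<^sup>2 + 2 * (cmod (h2 x))\<^sup>2) * \<bar>x\<bar> powr c"
      by (rule mult_right_mono) simp
    also have "\<dots> = 2 * ((cmod (h1 x))\<^sup>2 * \<bar>x\<bar> powr c) + 2 * ((cmod (h2 x))\<^sup>2 * \<bar>x\<bar> powr c)"
      by (simp add: algebra_simps)
    finally have "ennreal ((cmod (h1 x - h2 x))\<^sup>2 * \<bar>x\<bar> powr c)
        \<le> ennreal (2 * ((cmod (h1 x))\<^sup>2 * \<bar>x\<bar> powr c) + 2 * ((cmod (h2 x))\<^sup>2 * \<bar>x\<bar> powr c))"
      by (rule ennreal_leI)
    then show ?thesis
      by (simp add: ennreal_mult)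
  qed
  have "weighted_sq_norm c (\<lambda>x. h1 x - h2 x)
      \<le> (\<integral>\<^sup>+x. 2 * ennreal ((cmod (h1 x))\<^sup>2 * \<bar>x\<bar> powr c) + 2 * ennreal ((cmod (h2 x))\<^sup>2 * \<bar>x\<bar> powr c) \<partial>lborel)"
    unfolding weighted_sq_norm_def by (rule nn_integral_mono) (rule pointwise)
  also have "\<dots> = 2 * weighted_sq_norm c h1 + 2 * weighted_sq_norm c h2"
    unfolding weighted_sq_norm_def by (subst nn_integral_add) (auto simp: nn_integral_cmult)
  also have "\<dots> < \<infinity>"
    using assms by (simp add: ennreal_mult_less_top less_top)
  finally show ?thesis .
qed

lemma weighted_sq_norm_dilation_finite:
  assumes "h \<in> borel_measurable borel" "\<rho> > 0" "weighted_sq_norm c h < \<infinity>"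
  shows "weighted_sq_norm c (\<lambda>x. complex_of_real B * h (x * \<rho>)) < \<infinity>"
  using assms by (simp add: weighted_sq_norm_dilation ennreal_mult_less_top less_top)

lemma AE_eq_0_dilation:
  fixes h :: "real \<Rightarrow> complex"
  assumes [measurable]: "h \<in> borel_measurable borel" and "\<rho> > 0"
    and "AE x in lborel. h x = 0"
  shows "AE x in lborel. h (x * \<rho>) = 0"
proof -
  have "weighted_sq_norm 0 (\<lambda>x. complex_of_real 1 * h (x * \<rho>))
      = ennreal (1\<^sup>2 * \<rho> powr (- 0 - 1)) * weighted_sq_norm 0 h"
    using assms by (intro weighted_sq_norm_dilation)
  also have "weighted_sq_norm 0 h = 0"
    using assms by (simp add: weighted_sq_norm_eq_0_iff)
  finally show ?thesis
    by (simp add: weighted_sq_norm_eq_0_iff)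
qed

section \<open>The operator \<open>S + S\<^sup>2 + S\<^sup>3\<close>\<close>

definition three_term_dilation :: "real \<Rightarrow> real \<Rightarrow> (real \<Rightarrow> complex) \<Rightarrow> real \<Rightarrow> complex" where
  "three_term_dilation b \<sigma> w x = (\<Sum>k\<in>{1,2,3::nat}. complex_of_real (b ^ k) * w (x * \<sigma> ^ k))"

lemma three_term_dilation_eq:
  "three_term_dilation b \<sigma> w x = complex_of_real b * w (x * \<sigma>) + complex_of_real (b\<^sup>2) * w (x * \<sigma>\<^sup>2)
     + complex_of_real (b ^ 3) * w (x * \<sigma> ^ 3)"
  by (simp add: three_term_dilation_def)

lemma three_term_dilation_measurable[measurable]:
  assumes [measurable]: "w \<in> borel_measurable borel"
  shows "three_term_dilation b \<sigma> w \<in> borel_measurable borel"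
  unfolding three_term_dilation_eq[abs_def] by measurable

text \<open>With \<open>S w = b w(\<cdot> \<sigma>)\<close> the operator is \<open>S + S\<^sup>2 + S\<^sup>3\<close>, and \<open>(1 - S)(S + S\<^sup>2 + S\<^sup>3) = S (1 - S\<^sup>3)\<close>;
  \<open>S\<close> multiplies \<open>weighted_sq_norm\<close> by \<open>r = b\<^sup>2 \<sigma>\<^bsup>-c-1\<^esup>\<close>, and \<open>r\<^sup>3 \<noteq> 1\<close> makes \<open>1 - S\<^sup>3\<close> injective.\<close>

lemma three_term_dilation_injective:
  assumes b: "b > 0" and \<sigma>: "\<sigma> > 0" and r: "b\<^sup>2 * \<sigma> powr (- c - 1) \<noteq> 1"
    and e[measurable]: "e \<in> borel_measurable borel" and e_fin: "weighted_sq_norm c e < \<infinity>"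
    and zero: "AE x in lborel. three_term_dilation b \<sigma> e x = 0"
  shows "AE x in lborel. e x = 0"
proof -
  define r where "r = b\<^sup>2 * \<sigma> powr (- c - 1)"
  have "r > 0" using b \<sigma> by (simp add: r_def)
  define F where "F = three_term_dilation b \<sigma> e"
  define H where "H x = e x - complex_of_real (b ^ 3) * e (x * \<sigma> ^ 3)" for x
  have [measurable]: "F \<in> borel_measurable borel" "H \<in> borel_measurable borel"
    unfolding F_def H_def by measurable
  have F0: "AE x in lborel. F x = 0"
    using zero by (simp add: F_def)
  have "AE x in lborel. F (x * \<sigma>) = 0"
    by (rule AE_eq_0_dilation[OF _ \<sigma> F0]) measurable
  with F0 have "AE x in lborel. H (x * \<sigma>) = 0"
  proof eventually_elim
    case (elim x)
    have "complex_of_real b * H (x * \<sigma>) = F x - complex_of_real b * F (x * \<sigma>)"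
      by (simp add: H_def F_def three_term_dilation_eq eval_nat_numeral algebra_simps)
    then show ?case
      using elim b by simp
  qed
  then have "AE x in lborel. H (x * (1 / \<sigma>) * \<sigma>) = 0"
    using \<sigma> by (intro AE_eq_0_dilation[where h="\<lambda>x. H (x * \<sigma>)"]) auto
  then have "AE x in lborel. H x = 0"
    using \<sigma> by (auto elim!: eventually_mono)
  then have "weighted_sq_norm c e = weighted_sq_norm c (\<lambda>x. complex_of_real (b ^ 3) * e (x * \<sigma> ^ 3))"
    by (intro weighted_sq_norm_cong_AE) (auto simp: H_def elim!: eventually_mono)
  also have "\<dots> = ennreal (r ^ 3) * weighted_sq_norm c e"
    unfolding r_def using \<sigma> by (intro weighted_sq_norm_power_dilation) auto
  finally have "weighted_sq_norm c e = ennreal (r ^ 3) * weighted_sq_norm c e" .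
  moreover have "r ^ 3 \<noteq> 1"
    using power_eq_1_iff[of r 3] \<open>r > 0\<close> r by (auto simp: r_def)
  ultimately have "weighted_sq_norm c e = 0"
    using e_fin \<open>r > 0\<close> by (cases "weighted_sq_norm c e") (auto simp: ennreal_mult[symmetric])
  then show ?thesis
    by (simp add: weighted_sq_norm_eq_0_iff)
qed

text \<open>If \<open>g - S\<^sup>3 g = v\<close> then \<open>w = S\<^sup>-\<^sup>1 g - g\<close> solves the equation; if \<open>g - S\<^sup>-\<^sup>3 g = v\<close> then
  \<open>w = S\<^sup>-\<^sup>3 g - S\<^sup>-\<^sup>4 g\<close> does. Whichever of \<open>S\<^sup>3\<close>, \<open>S\<^sup>-\<^sup>3\<close> is a contraction provides \<open>g\<close>.\<close>

lemma three_term_dilation_surjective: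
  assumes b: "b > 0" and \<sigma>: "\<sigma> > 0" and r: "b\<^sup>2 * \<sigma> powr (- c - 1) \<noteq> 1"
    and v[measurable]: "v \<in> borel_measurable borel" and v_fin: "weighted_sq_norm c v < \<infinity>"
  shows "\<exists>w. w \<in> borel_measurable borel \<and> weighted_sq_norm c w < \<infinity> \<and>
           (AE x in lborel. three_term_dilation b \<sigma> w x = v x)"
proof -
  define r where "r = b\<^sup>2 * \<sigma> powr (- c - 1)"
  have "r > 0" using b \<sigma> by (simp add: r_def)
  have r3: "(b ^ 3)\<^sup>2 * (\<sigma> ^ 3) powr (- c - 1) = r ^ 3"
    unfolding r_def using \<sigma> by (rule power_dilation_factor)
  consider "r < 1" | "r > 1"
    using r unfolding r_def by fastforce
  then show ?thesis
  proof cases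
    case 1
    then have contr: "(b ^ 3)\<^sup>2 * (\<sigma> ^ 3) powr (- c - 1) < 1"
      unfolding r3 using \<open>r > 0\<close> by (simp add: power_less_one_iff)
    obtain g where g[measurable]: "g \<in> borel_measurable borel" and "weighted_sq_norm c g < \<infinity>"
      and g_eq: "AE x in lborel. g x - complex_of_real (b ^ 3) * g (x * \<sigma> ^ 3) = v x"
      using dilation_equation_solvable[OF v v_fin _ _ contr] b \<sigma> by auto
    define w where "w y = complex_of_real (1 / b) * g (y * (1 / \<sigma>)) - g y" for y
    have "w \<in> borel_measurable borel"
      unfolding w_def by measurable
    moreover have "weighted_sq_norm c w < \<infinity>"
      unfolding w_def using \<sigma> \<open>weighted_sq_norm c g < \<infinity>\<close>
      by (intro weighted_sq_norm_diff_finite weighted_sq_norm_dilation_finite) measurable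
    moreover have "three_term_dilation b \<sigma> w x = g x - complex_of_real (b ^ 3) * g (x * \<sigma> ^ 3)" for x
      using b \<sigma> by (simp add: w_def three_term_dilation_eq eval_nat_numeral field_simps)
    ultimately show ?thesis
      using g_eq by auto
  next
    case 2
    have "(1 / b)\<^sup>2 * (1 / \<sigma>) powr (- c - 1) = 1 / r"
      using b \<sigma> by (simp add: r_def powr_divide power_divide)
    then have "((1 / b) ^ 3)\<^sup>2 * ((1 / \<sigma>) ^ 3) powr (- c - 1) = (1 / r) ^ 3"
      using \<sigma> by (simp only: power_dilation_factor[of "1 / \<sigma>"] divide_pos_pos zero_less_one)
    then have contr: "((1 / b) ^ 3)\<^sup>2 * ((1 / \<sigma>) ^ 3) powr (- c - 1) < 1"
      using 2 by (simp add: power_less_one_iff)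
    obtain g where g[measurable]: "g \<in> borel_measurable borel" and "weighted_sq_norm c g < \<infinity>"
      and g_eq: "AE x in lborel. g x - complex_of_real ((1 / b) ^ 3) * g (x * (1 / \<sigma>) ^ 3) = v x"
      using dilation_equation_solvable[OF v v_fin _ _ contr] b \<sigma> by auto
    define w where "w y = complex_of_real ((1 / b) ^ 3) * g (y * (1 / \<sigma>) ^ 3)
      - complex_of_real ((1 / b) ^ 4) * g (y * (1 / \<sigma>) ^ 4)" for y
    have "w \<in> borel_measurable borel"
      unfolding w_def by measurable
    moreover have "weighted_sq_norm c w < \<infinity>"
      unfolding w_def using \<sigma> \<open>weighted_sq_norm c g < \<infinity>\<close>
      by (intro weighted_sq_norm_diff_finite weighted_sq_norm_dilation_finite) measurable
    moreover have "three_term_dilation b \<sigma> w x = g x - complex_of_real ((1 / b) ^ 3) * g (x * (1 / \<sigma>) ^ 3)" for x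
      using b \<sigma> by (simp add: w_def three_term_dilation_eq eval_nat_numeral field_simps)
    ultimately show ?thesis
      using g_eq by auto
  qed
qed

lemma AE_lborel_nonzero_imp_iff:
  "(AE x in lborel. (x::real) \<noteq> 0 \<longrightarrow> P x) \<longleftrightarrow> (AE x in lborel. P x)"
proof
  assume "AE x in lborel. x \<noteq> 0 \<longrightarrow> P x"
  with AE_lborel_singleton[of 0] show "AE x in lborel. P x"
    by eventually_elim simp
qed (auto elim: eventually_mono)

lemma three_term_dilation_diff:
  "three_term_dilation b \<sigma> (\<lambda>x. f x - g x) x = three_term_dilation b \<sigma> f x - three_term_dilation b \<sigma> g x"
  by (simp add: three_term_dilation_def sum_subtractf right_diff_distrib)

lemma three_term_dilation_equation_unique_solution:
  assumes b: "b > 0" and \<sigma>: "\<sigma> > 0" and r: "b\<^sup>2 * \<sigma> powr (- c - 1) \<noteq> 1" and v: "L2w c v"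
  shows "\<exists>w. L2w c w \<and> (AE x in lborel. v x = three_term_dilation b \<sigma> w x)
           \<and> (\<forall>w'. L2w c w' \<and> (AE x in lborel. v x = three_term_dilation b \<sigma> w' x)
                  \<longrightarrow> (AE x in lborel. w' x = w x))"
proof -
  obtain w where w[measurable]: "w \<in> borel_measurable borel" and w_fin: "weighted_sq_norm c w < \<infinity>"
    and w_eq: "AE x in lborel. three_term_dilation b \<sigma> w x = v x"
    using three_term_dilation_surjective[OF b \<sigma> r] v unfolding L2w_iff_weighted_sq_norm by blast
  have unique: "AE x in lborel. w' x = w x"
    if "L2w c w'" and w'_eq: "AE x in lborel. v x = three_term_dilation b \<sigma> w' x" for w'
  proof -
    have [measurable]: "w' \<in> borel_measurable borel" and "weighted_sq_norm c w' < \<infinity>"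
      using \<open>L2w c w'\<close> unfolding L2w_iff_weighted_sq_norm by blast+
    then have diff_fin: "weighted_sq_norm c (\<lambda>x. w' x - w x) < \<infinity>"
      using w_fin by (intro weighted_sq_norm_diff_finite) simp_all
    have diff_zero: "AE x in lborel. three_term_dilation b \<sigma> (\<lambda>x. w' x - w x) x = 0"
      using w_eq w'_eq by eventually_elim (simp add: three_term_dilation_diff)
    have "AE x in lborel. w' x - w x = 0"
      by (rule three_term_dilation_injective[OF b \<sigma> r _ diff_fin diff_zero]) measurable
    then show ?thesis
      by (rule eventually_mono) simp
  qed
  have "L2w c w"
    using w_fin by (simp add: L2w_iff_weighted_sq_norm)
  moreover have "AE x in lborel. v x = three_term_dilation b \<sigma> w x"
    using w_eq by (rule eventually_mono) simp
  ultimately show ?thesis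
    using unique by blast
qed

section \<open>The multipliers and the ratio inequalities\<close>

lemma norm_cubic_on_circle_ge:
  fixes q :: real and z :: complex
  assumes q: "q > 0" and z: "cmod z = 1"
  shows "q * \<bar>1 - q ^ 3\<bar> / (1 + q) \<le> cmod (\<Sum>k\<in>{1,2,3::nat}. complex_of_real (q ^ k) * z ^ k)"
proof -
  define y where "y = complex_of_real q * z"
  have "cmod y = q"
    using q z by (simp add: y_def norm_mult)
  have sum_eq: "(\<Sum>k\<in>{1,2,3::nat}. complex_of_real (q ^ k) * z ^ k) = y * (1 + y + y\<^sup>2)"
    by (simp add: y_def algebra_simps eval_nat_numeral)
  have "\<bar>1 - q ^ 3\<bar> \<le> cmod (1 - y ^ 3)"
    using norm_triangle_ineq3[of 1 "y ^ 3"] \<open>cmod y = q\<close> by (simp add: norm_power)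
  also have "1 - y ^ 3 = (1 - y) * (1 + y + y\<^sup>2)"
    by (simp add: algebra_simps eval_nat_numeral)
  also have "cmod \<dots> \<le> (1 + q) * cmod (1 + y + y\<^sup>2)"
    unfolding norm_mult
    using norm_triangle_ineq4[of 1 y] \<open>cmod y = q\<close> by (intro mult_right_mono) auto
  finally have "\<bar>1 - q ^ 3\<bar> / (1 + q) \<le> cmod (1 + y + y\<^sup>2)"
    using q by (simp add: divide_le_eq mult.commute)
  then show ?thesis
    unfolding sum_eq norm_mult \<open>cmod y = q\<close> using q
    by (metis less_eq_real_def mult_left_mono times_divide_eq_right)
qed

lemma INF_norm_cubic_on_circle_pos:
  fixes q :: real and z :: "'a \<Rightarrow> complex"
  assumes q: "q > 0" "q \<noteq> 1" and z: "\<And>x. cmod (z x) = 1"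
  shows "(INF x. cmod (\<Sum>k\<in>{1,2,3::nat}. complex_of_real (q ^ k) * z x ^ k)) > 0"
proof -
  have "q ^ 3 \<noteq> 1"
    using power_eq_1_iff[of q 3] q by auto
  then have "0 < q * \<bar>1 - q ^ 3\<bar> / (1 + q)"
    using q by simp
  also have "\<dots> \<le> (INF x. cmod (\<Sum>k\<in>{1,2,3::nat}. complex_of_real (q ^ k) * z x ^ k))"
    using norm_cubic_on_circle_ge[OF q(1) z] by (rule cINF_greatest[OF UNIV_not_empty])
  finally show ?thesis .
qed

lemma exp_mult_bounds_of_divide_bounds:
  fixes L U \<alpha> \<gamma> :: real
  assumes L: "L > 0" and U: "U > 0" and \<gamma>: "\<gamma> \<noteq> 0"
    and pos: "\<gamma> > 0 \<Longrightarrow> ln L / \<gamma> \<le> \<alpha> \<and> \<alpha> \<le> ln U / \<gamma>"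
    and neg: "\<gamma> < 0 \<Longrightarrow> ln U / \<gamma> \<le> \<alpha> \<and> \<alpha> \<le> ln L / \<gamma>"
  shows "L \<le> exp (\<alpha> * \<gamma>) \<and> exp (\<alpha> * \<gamma>) \<le> U"
proof -
  have "ln L \<le> \<alpha> * \<gamma> \<and> \<alpha> * \<gamma> \<le> ln U"
  proof (cases "\<gamma> > 0")
    case True
    then show ?thesis
      using pos by (simp add: pos_divide_le_eq pos_le_divide_eq)
  next
    case False
    then show ?thesis
      using neg \<gamma> by (simp add: neg_divide_le_eq neg_le_divide_eq)
  qed
  then show ?thesis
    using L U by (metis exp_le_cancel_iff exp_ln)
qed

lemma golden_powr_sum_ge_one:
  fixes q :: real
  assumes lo: "(sqrt 5 - 1) / 2 \<le> q" and hi: "q \<le> (1 + sqrt 5) / 2" and i: "i \<in> {1,2,3::nat}"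
  shows "(\<Sum>j\<in>{1,2,3} - {i}. q powr (real j - real i)) \<ge> 1"
proof -
  define p :: real where "p = (sqrt 5 - 1) / 2"
  have "sqrt 5 > 1"
    by (simp add: real_less_rsqrt)
  then have "p > 0"
    by (simp add: p_def)
  have "p + p\<^sup>2 = 1" and phi: "(1 + sqrt 5) / 2 = 1 / p"
    unfolding p_def power2_eq_square using \<open>sqrt 5 > 1\<close> by (simp_all add: field_simps)
  have golden: "d + d\<^sup>2 \<ge> 1" if "p \<le> d" for d
  proof -
    have "p\<^sup>2 \<le> d\<^sup>2"
      using that \<open>p > 0\<close> by (intro power_mono) auto
    then show ?thesis
      using that \<open>p + p\<^sup>2 = 1\<close> by linarith
  qed
  have "p \<le> q" and "q > 0"
    using lo \<open>p > 0\<close> unfolding p_def[symmetric] by auto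
  have "p \<le> 1 / q"
    using hi \<open>p > 0\<close> \<open>q > 0\<close> unfolding phi by (simp add: le_divide_eq divide_le_eq mult.commute)
  consider "i = 1" | "i = 2" | "i = 3"
    using i by auto
  then show ?thesis
  proof cases
    case 1
    then have "(\<Sum>j\<in>{1,2,3} - {i}. q powr (real j - real i)) = q powr 1 + q powr 2"
      by (simp add: insert_Diff_if)
    then show ?thesis
      using golden[OF \<open>p \<le> q\<close>] \<open>q > 0\<close> by simp
  next
    case 2
    then have "(\<Sum>j\<in>{1,2,3} - {i}. q powr (real j - real i)) = q powr (- 1) + q powr 1"
      by (simp add: insert_Diff_if)
    also have "\<dots> = 1 / q + q"
      using \<open>q > 0\<close> by (simp add: powr_minus_divide)
    moreover have "1 \<le> 1 / q + q"
    proof (cases "1 \<le> q")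
      case True
      then show ?thesis
        using \<open>q > 0\<close> by (simp add: add_increasing)
    next
      case False
      then have "1 \<le> 1 / q"
        using \<open>q > 0\<close> by (simp add: le_divide_eq)
      then show ?thesis
        using \<open>q > 0\<close> by (simp add: add_increasing2)
    qed
    ultimately show ?thesis
      by simp
  next
    case 3
    then have "(\<Sum>j\<in>{1,2,3} - {i}. q powr (real j - real i)) = q powr (- 2) + q powr (- 1)"
      by (simp add: insert_Diff_if)
    also have "\<dots> = 1 / q + (1 / q)\<^sup>2"
      using \<open>q > 0\<close> by (simp add: powr_minus_divide power_one_over)
    finally show ?thesis
      using golden[OF \<open>p \<le> 1 / q\<close>] by simp
  qed
qed

lemma sum_permutes_remove:
  assumes "\<sigma> permutes S" and "finite S" and "a \<in> S"
  shows "(\<Sum>j\<in>S - {a}. g (\<sigma> j)) = (\<Sum>j\<in>S - {\<sigma> a}. g j)"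
proof -
  have "inj_on \<sigma> (S - {a})"
    using permutes_inj[OF assms(1)] by (rule inj_on_subset) simp
  moreover have "\<sigma> ` (S - {a}) = S - {\<sigma> a}"
    using permutes_image[OF assms(1)] permutes_inj[OF assms(1)] by (simp add: image_set_diff)
  ultimately show ?thesis
    using sum.reindex[of \<sigma> "S - {a}" g] by simp
qed

lemma permutation_exp_ratio_sum_ge_one:
  fixes \<alpha> \<gamma> :: real
  assumes lo: "(sqrt 5 - 1) / 2 \<le> exp (\<alpha> * \<gamma>)" and hi: "exp (\<alpha> * \<gamma>) \<le> (1 + sqrt 5) / 2"
    and \<sigma>: "\<sigma> permutes {1,2,3::nat}"
  shows "(\<Sum>j\<in>{2,3}. (exp (\<alpha> * real (\<sigma> j)) / exp (\<alpha> * real (\<sigma> 1))) powr \<gamma>) \<ge> 1"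
proof -
  define g where "g j = exp (\<alpha> * \<gamma>) powr (real j - real (\<sigma> 1))" for j :: nat
  have "(exp (\<alpha> * real (\<sigma> j)) / exp (\<alpha> * real (\<sigma> 1))) powr \<gamma> = g (\<sigma> j)" for j
    by (simp add: g_def powr_def exp_diff[symmetric] algebra_simps)
  then have "(\<Sum>j\<in>{2,3}. (exp (\<alpha> * real (\<sigma> j)) / exp (\<alpha> * real (\<sigma> 1))) powr \<gamma>)
      = (\<Sum>j\<in>{1,2,3} - {1}. g (\<sigma> j))"
    by (simp add: insert_Diff_if)
  also have "\<dots> = (\<Sum>j\<in>{1,2,3} - {\<sigma> 1}. g j)"
    using \<sigma> by (intro sum_permutes_remove) auto
  also have "\<dots> \<ge> 1"
    unfolding g_def using lo hi permutes_in_image[OF \<sigma>, of 1] by (intro golden_powr_sum_ge_one) auto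
  finally show ?thesis .
qed

section \<open>The three-step function\<close>

lemma set_integral_step_function:
  fixes a :: "'i \<Rightarrow> real" and \<Delta> :: "'i \<Rightarrow> 'n::euclidean_space set"
    and F :: "real \<Rightarrow> 'b::{banach, second_countable_topology}"
  assumes K: "finite K" and \<Delta>: "\<And>k. k \<in> K \<Longrightarrow> \<Delta> k \<in> sets borel"
    and fin: "\<And>k. k \<in> K \<Longrightarrow> emeasure lborel (\<Delta> k) < \<infinity>"
    and disj: "disjoint_family_on \<Delta> K" and a: "\<And>k. k \<in> K \<Longrightarrow> a k \<noteq> 0"
    and f_def: "f = (\<lambda>s. \<Sum>k\<in>K. a k * indicator (\<Delta> k) s)"
  shows "(LINT s:supp_fun f|lborel. F (f s)) = (\<Sum>k\<in>K. measure lborel (\<Delta> k) *\<^sub>R F (a k))"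
proof -
  have pointwise: "indicator (supp_fun f) s *\<^sub>R F (f s) = (\<Sum>k\<in>K. indicator (\<Delta> k) s *\<^sub>R F (a k))" for s
  proof (cases "\<exists>k\<in>K. s \<in> \<Delta> k")
    case True
    then obtain k where k: "k \<in> K" "s \<in> \<Delta> k"
      by blast
    have only_k: "s \<in> \<Delta> j \<longleftrightarrow> j = k" if "j \<in> K" for j
      using disj k that by (auto simp: disjoint_family_on_def)
    have "f s = a k"
      unfolding f_def using K k by (simp add: only_k indicator_def if_distrib cong: sum.cong)
    moreover have "(\<Sum>j\<in>K. indicator (\<Delta> j) s *\<^sub>R F (a j)) = (\<Sum>j\<in>K. if j = k then F (a j) else 0)"
      by (rule sum.cong) (use k in \<open>simp_all add: only_k\<close>)
    then have "(\<Sum>j\<in>K. indicator (\<Delta> j) s *\<^sub>R F (a j)) = F (a k)"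
      using K k by simp
    ultimately show ?thesis
      using a[OF k(1)] by (simp add: supp_fun_def)
  next
    case False
    then show ?thesis
      by (simp add: f_def supp_fun_def indicator_def)
  qed
  have integrable: "integrable lborel (\<lambda>s. indicator (\<Delta> k) s *\<^sub>R F (a k))" if "k \<in> K" for k
    using \<Delta>[OF that] fin[OF that] by (intro integrable_scaleR_left integrable_real_indicator) auto
  have "(LINT s:supp_fun f|lborel. F (f s)) = (LINT s|lborel. (\<Sum>k\<in>K. indicator (\<Delta> k) s *\<^sub>R F (a k)))"
    unfolding set_lebesgue_integral_def pointwise ..
  also have "\<dots> = (\<Sum>k\<in>K. LINT s|lborel. indicator (\<Delta> k) s *\<^sub>R F (a k))"
    using integrable by (rule Bochner_Integration.integral_sum)
  also have "\<dots> = (\<Sum>k\<in>K. measure lborel (\<Delta> k) *\<^sub>R F (a k))"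
    using \<Delta> fin by (intro sum.cong) simp_all
  finally show ?thesis .
qed

context
  fixes \<alpha> :: real and \<Delta> :: "nat \<Rightarrow> 'n::euclidean_space set" and f :: "'n \<Rightarrow> real"
  assumes Delta_borel: "\<And>k. k \<in> {1,2,3} \<Longrightarrow> \<Delta> k \<in> sets borel"
    and Delta_meas: "\<And>k. k \<in> {1,2,3} \<Longrightarrow> emeasure lborel (\<Delta> k) = 1"
    and Delta_disj: "disjoint_family_on \<Delta> {1,2,3}"
    and f_def: "f = (\<lambda>s. \<Sum>k\<in>{1,2,3::nat}. exp (\<alpha> * real k) * indicator (\<Delta> k) s)"
begin

lemma set_integral_exp_step:
  fixes F :: "real \<Rightarrow> 'b::{banach, second_countable_topology}"
  shows "(LINT s:supp_fun f|lborel. F (f s)) = (\<Sum>k\<in>{1,2,3::nat}. F (exp (\<alpha> * real k)))"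
proof -
  have "(LINT s:supp_fun f|lborel. F (f s)) = (\<Sum>k\<in>{1,2,3}. measure lborel (\<Delta> k) *\<^sub>R F (exp (\<alpha> * real k)))"
    by (rule set_integral_step_function[OF _ Delta_borel _ Delta_disj _ f_def]) (simp_all add: Delta_meas)
  also have "\<dots> = (\<Sum>k\<in>{1,2,3::nat}. F (exp (\<alpha> * real k)))"
    using Delta_meas by (intro sum.cong) (simp_all add: measure_def)
  finally show ?thesis .
qed

lemma m_plus_exp_step:
  "m_plus c (\<lambda>x. \<bar>x\<bar> powr \<beta>) f x
     = (\<Sum>k\<in>{1,2,3::nat}. complex_of_real (exp (\<alpha> * (\<beta> + (c - 1) / 2)) ^ k)
          * exp (- \<i> * complex_of_real (\<alpha> * x)) ^ k)"
proof -
  have "complex_of_real (\<bar>exp t\<bar> powr \<beta> * \<bar>exp t\<bar> powr ((c - 1) / 2)) * exp (- \<i> * complex_of_real (x * ln \<bar>exp t\<bar>))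
      = complex_of_real (exp (\<alpha> * (\<beta> + (c - 1) / 2)) ^ k) * exp (- \<i> * complex_of_real (\<alpha> * x)) ^ k"
    if "t = \<alpha> * real k" for t k
    unfolding that exp_of_nat_mult[symmetric] of_real_exp[symmetric] of_real_power[symmetric]
    by (simp add: powr_def exp_add[symmetric] algebra_simps)
  then show ?thesis
    unfolding m_plus_def set_integral_exp_step[of "\<lambda>y. complex_of_real (\<bar>y\<bar> powr \<beta> * \<bar>y\<bar> powr ((c - 1) / 2))
      * exp (- \<i> * complex_of_real (x * ln \<bar>y\<bar>))"]
    by simp
qed

lemma m_minus_exp_step: "m_minus c u f x = m_plus c u f x"
  unfolding m_minus_def m_plus_def
    set_integral_exp_step[of "\<lambda>y. complex_of_real (u y * \<bar>y\<bar> powr ((c - 1) / 2))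
      * exp (- \<i> * complex_of_real (x * ln \<bar>y\<bar>)) * complex_of_real (sgn y)"]
    set_integral_exp_step[of "\<lambda>y. complex_of_real (u y * \<bar>y\<bar> powr ((c - 1) / 2))
      * exp (- \<i> * complex_of_real (x * ln \<bar>y\<bar>))"]
  by simp

lemma Top_exp_step:
  "Top (\<lambda>x. \<bar>x\<bar> powr \<beta>) f w x = three_term_dilation (exp ((\<beta> - 1) * \<alpha>)) (exp (- \<alpha>)) w x"
proof -
  have "\<bar>exp (\<alpha> * real k)\<bar> powr \<beta> / \<bar>exp (\<alpha> * real k)\<bar> = exp ((\<beta> - 1) * \<alpha>) ^ k" for k :: nat
  proof -
    have "\<bar>exp (\<alpha> * real k)\<bar> powr \<beta> / \<bar>exp (\<alpha> * real k)\<bar> = exp (real k * ((\<beta> - 1) * \<alpha>))"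
      by (simp add: powr_def exp_diff[symmetric] algebra_simps)
    then show ?thesis
      by (simp only: exp_of_nat_mult)
  qed
  moreover have "x / exp (\<alpha> * real k) = x * exp (- \<alpha>) ^ k" for k :: nat
  proof -
    have "exp (- \<alpha>) ^ k = exp (- (\<alpha> * real k))"
      by (simp add: exp_of_nat_mult[symmetric] mult.commute)
    then show ?thesis
      by (simp add: exp_minus divide_inverse)
  qed
  ultimately show ?thesis
    unfolding Top_def three_term_dilation_def
      set_integral_exp_step[of "\<lambda>y. complex_of_real (\<bar>y\<bar> powr \<beta> / \<bar>y\<bar>) * w (x / y)"]
    by simp
qed

end

theorem mainTheorem4:
  fixes c \<beta> \<alpha> :: real
    and u :: "real \<Rightarrow> real"
    and \<Delta> :: "nat \<Rightarrow> 'n::euclidean_space set"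
    and f :: "'n \<Rightarrow> real"
  assumes beta_ne: "\<beta> \<noteq> - (c - 1) / 2"
    and u_def: "u = (\<lambda>x. \<bar>x\<bar> powr \<beta>)"
    and Delta_borel: "\<And>k. k \<in> {1,2,3} \<Longrightarrow> \<Delta> k \<in> sets borel"
    and Delta_meas: "\<And>k. k \<in> {1,2,3} \<Longrightarrow> emeasure lborel (\<Delta> k) = 1"
    and Delta_disj: "disjoint_family_on \<Delta> {1,2,3}"
    and f_def: "f = (\<lambda>s. \<Sum>k\<in>{1,2,3::nat}. exp (\<alpha> * real k) * indicator (\<Delta> k) s)"
    and alpha_ne: "\<alpha> \<noteq> 0"
    and alpha_pos: "\<beta> + (c - 1) / 2 > 0 \<Longrightarrow>
        ln ((sqrt 5 - 1) / 2) / (\<beta> + (c - 1) / 2) \<le> \<alpha> \<and>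
        \<alpha> \<le> ln ((1 + sqrt 5) / 2) / (\<beta> + (c - 1) / 2)"
    and alpha_neg: "\<beta> + (c - 1) / 2 < 0 \<Longrightarrow>
        ln ((1 + sqrt 5) / 2) / (\<beta> + (c - 1) / 2) \<le> \<alpha> \<and>
        \<alpha> \<le> ln ((sqrt 5 - 1) / 2) / (\<beta> + (c - 1) / 2)"
  shows "(\<forall>\<sigma>. \<sigma> permutes {1,2,3::nat} \<longrightarrow>
            (\<Sum>j\<in>{2,3}. (exp (\<alpha> * real (\<sigma> j)) / exp (\<alpha> * real (\<sigma> 1))) powr (\<beta> + (c - 1) / 2)) \<ge> 1)
       \<and> (INF x. cmod (m_plus c u f x)) > 0
       \<and> (INF x. cmod (m_minus c u f x)) > 0
       \<and> (\<forall>v. L2w c v \<longrightarrow>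
            (\<exists>w. L2w c w \<and> (AE x in lborel. x \<noteq> 0 \<longrightarrow> v x = Top u f w x)
               \<and> (\<forall>w'. L2w c w' \<and> (AE x in lborel. x \<noteq> 0 \<longrightarrow> v x = Top u f w' x)
                      \<longrightarrow> (AE x in lborel. x \<noteq> 0 \<longrightarrow> w' x = w x))))"
proof -
  note step_function = Delta_borel Delta_meas Delta_disj f_def
  define \<gamma> where "\<gamma> = \<beta> + (c - 1) / 2"
  have "\<gamma> \<noteq> 0"
    using beta_ne by (simp add: \<gamma>_def field_simps)
  have "sqrt 5 > 1"
    by (simp add: real_less_rsqrt)
  then have "(sqrt 5 - 1) / 2 > 0" "(1 + sqrt 5) / 2 > 0"
    by (simp_all add: add_pos_nonneg)
  from exp_mult_bounds_of_divide_bounds[OF this \<open>\<gamma> \<noteq> 0\<close> alpha_pos[folded \<gamma>_def] alpha_neg[folded \<gamma>_def]]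
  have golden: "(sqrt 5 - 1) / 2 \<le> exp (\<alpha> * \<gamma>) \<and> exp (\<alpha> * \<gamma>) \<le> (1 + sqrt 5) / 2" .
  have m_plus_pos: "(INF x. cmod (m_plus c u f x)) > 0"
    unfolding u_def
    by (simp only: m_plus_exp_step[OF step_function] flip: \<gamma>_def, rule INF_norm_cubic_on_circle_pos)
      (use alpha_ne \<open>\<gamma> \<noteq> 0\<close> in auto)
  have "(exp ((\<beta> - 1) * \<alpha>))\<^sup>2 * exp (- \<alpha>) powr (- c - 1) = exp (2 * (\<alpha> * \<gamma>))"
    by (simp add: \<gamma>_def powr_def power2_eq_square exp_add[symmetric] field_simps)
  then have r: "(exp ((\<beta> - 1) * \<alpha>))\<^sup>2 * exp (- \<alpha>) powr (- c - 1) \<noteq> 1"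
    using alpha_ne \<open>\<gamma> \<noteq> 0\<close> by simp
  have Top_eq: "Top u f w x = three_term_dilation (exp ((\<beta> - 1) * \<alpha>)) (exp (- \<alpha>)) w x" for w x
    unfolding u_def by (rule Top_exp_step[OF step_function])
  have m_minus_eq: "m_minus c u f x = m_plus c u f x" for x
    by (rule m_minus_exp_step[OF step_function])
  show ?thesis
    using three_term_dilation_equation_unique_solution[OF exp_gt_zero exp_gt_zero r]
      permutation_exp_ratio_sum_ge_one[OF golden[THEN conjunct1] golden[THEN conjunct2]] m_plus_pos
    unfolding AE_lborel_nonzero_imp_iff Top_eq m_minus_eq \<gamma>_def
    by blast
qed

end
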